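(* Consider a family, indexed by the number of qubits $n$, of parametrized $n$-qubit states $\widetilde{\rho} = \rho(\vec{\alpha})$ depending on a random variable $\vec{\alpha}$, and a POVM $\mathcal{M} = \{M_k\}_{k=1}^{|\mathcal{M}|}$ with $|\mathcal{M}| \in \mathcal{O}(\operatorname{poly}(n))$. Let $\mathbb{P}_{\vec{\alpha}} = (p_1(\vec{\alpha}), \dots, p_{|\mathcal{M}|}(\vec{\alpha}))$ with $p_k(\vec{\alpha}) = \operatorname{Tr}[\widetilde{\rho} M_k]$ be the outcome distribution. Assume the outcome probabilities exponentially concentrate: there exist $\vec{\alpha}$-independent numbers $\mu_k$ and $\beta \in \mathcal{O}(\exp(-n))$ such that for every $k$ and every $\delta' > 0$, $$\Pr_{\vec{\alpha}}\big(|p_k(\vec{\alpha}) - \mu_k| \geq \delta'\big) \leq \frac{\beta}{\delta'^2},$$ and let $\mathbb{P}_{\rm fixed} = (\mu_1, \dots, \mu_{|\mathcal{M}|})$. Let $N \in \mathcal{O}(\operatorname{poly}(n))$, and suppose a set $\mathcal{S}_N$ of $N$ i.i.d. samples is drawn, with probability $1/2$ each, either from $\mathbb{P}_{\vec{\alpha}}$ (hypothesis $\mathcal{H}_0$) or from $\mathbb{P}_{\rm fixed}$ (hypothesis $\mathcal{H}_1$). Then, with probability at least $1-\delta$ over the choice of $\vec{\alpha}$, where $\delta = |\mathcal{M}|\sqrt{\beta} \in \mathcal{O}(\exp(-n))$, every procedure deciding between $\mathcal{H}_0$ and $\mathcal{H}_1$ from $\mathcal{S}_N$ makes the right decision with probability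 at most $\frac{1}{2} + \varepsilon$, where $\varepsilon = \frac{N|\mathcal{M}|\beta^{1/4}}{4} \in \mathcal{O}(\exp(-n))$. In particular, $\mathbb{P}_{\vec{\alpha}}$ and $\mathbb{P}_{\rm fixed}$ are then statistically indistinguishable with $N$ samples.
   Context: A POVM is a finite set of positive semidefinite operators summing to the identity; measuring it on a state $\rho$ yields outcome $k$ with probability $\operatorname{Tr}[\rho M_k]$. Two distributions $\mathbb{P},\mathbb{P}'$ are called statistically indistinguishable with $N$ samples if, given $N$ i.i.d. samples drawn (with equal prior probability) all from $\mathbb{P}$ or all from $\mathbb{P}'$, no algorithm identifies the correct source with probability greater than $0.51$. Asymptotic notation refers to $n \to \infty$. *)

theory Defs
  imports "HOL-Probability.Probability" "HOL-Library.Landau_Symbols" "Jordan_Normal_Form.Matrix"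
begin

definition mat_trace :: "complex mat \<Rightarrow> complex" where
  "mat_trace A = (\<Sum>i<dim_row A. A $$ (i, i))"

definition psd_mat :: "nat \<Rightarrow> complex mat \<Rightarrow> bool" where
  "psd_mat d A \<longleftrightarrow> A \<in> carrier_mat d d \<and>
     (\<forall>v :: nat \<Rightarrow> complex.
        let q = (\<Sum>i<d. \<Sum>j<d. cnj (v i) * A $$ (i, j) * v j) in Im q = 0 \<and> Re q \<ge> 0)"

definition density_mat :: "nat \<Rightarrow> complex mat \<Rightarrow> bool" where
  "density_mat d \<rho> \<longleftrightarrow> psd_mat d \<rho> \<and> mat_trace \<rho> = 1"

definition is_POVM :: "nat \<Rightarrow> nat \<Rightarrow> (nat \<Rightarrow> complex mat) \<Rightarrow> bool" where
  "is_POVM d m M \<longleftrightarrow> (\<forall>k<m. psd_mat d (M k)) \<and>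
     (\<forall>i<d. \<forall>j<d. (\<Sum>k<m. M k $$ (i, j)) = 1\<^sub>m d $$ (i, j))"

text \<open>Outcome probability Tr[rho M_k] (real for PSD rho, M_k).\<close>
definition outcome_prob :: "complex mat \<Rightarrow> complex mat \<Rightarrow> real" where
  "outcome_prob \<rho> Mk = Re (mat_trace (\<rho> * Mk))"

definition samples :: "nat \<Rightarrow> nat \<Rightarrow> nat list set" where
  "samples m N = {xs. length xs = N \<and> set xs \<subseteq> {..<m}}"

definition sample_prob :: "(nat \<Rightarrow> real) \<Rightarrow> nat list \<Rightarrow> real" where
  "sample_prob P xs = (\<Prod>x\<leftarrow>xs. P x)"

text \<open>Success probability of a (possibly randomized) test D, where D xs \<in> [0,1] is the
  probability of answering H0 (source P) on samples xs; equal priors on P (H0) and Q (H1).\<close>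
definition success_prob ::
  "nat \<Rightarrow> nat \<Rightarrow> (nat \<Rightarrow> real) \<Rightarrow> (nat \<Rightarrow> real) \<Rightarrow> (nat list \<Rightarrow> real) \<Rightarrow> real" where
  "success_prob m N P Q D =
     1/2 * (\<Sum>xs\<in>samples m N. sample_prob P xs * D xs)
   + 1/2 * (\<Sum>xs\<in>samples m N. sample_prob Q xs * (1 - D xs))"

definition is_test :: "(nat list \<Rightarrow> real) \<Rightarrow> bool" where
  "is_test D \<longleftrightarrow> (\<forall>xs. 0 \<le> D xs \<and> D xs \<le> 1)"

definition stat_indist :: "nat \<Rightarrow> nat \<Rightarrow> (nat \<Rightarrow> real) \<Rightarrow> (nat \<Rightarrow> real) \<Rightarrow> bool" where
  "stat_indist m N P Q \<longleftrightarrow> (\<forall>D. is_test D \<longrightarrow> success_prob m N P Q D \<le> 51/100)"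

end

theory Submission
  imports Defs "HOL-Real_Asymp.Real_Asymp"
begin

text \<open>
  By the tail bound at \<open>\<delta>' = \<beta>\<^sup>1\<^sup>/\<^sup>4\<close>, each outcome probability \<open>p\<^sub>k(\<alpha>)\<close> is more than
  \<open>\<beta>\<^sup>1\<^sup>/\<^sup>4\<close> away from \<open>\<mu>\<^sub>k\<close> with probability at most \<open>\<surd>\<beta>\<close>; a union bound over the
  \<open>|\<M>|\<close> outcomes yields an event of probability \<open>\<ge> 1 - |\<M>|\<surd>\<beta>\<close> on which the two outcome
  distributions are uniformly \<open>\<beta>\<^sup>1\<^sup>/\<^sup>4\<close>-close, hence \<open>|\<M>|\<beta>\<^sup>1\<^sup>/\<^sup>4\<close>-close in \<open>\<ell>\<^sub>1\<close>.
  A hybrid argument bounds the \<open>\<ell>\<^sub>1\<close> distance of the \<open>N\<close>-fold product distributions by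
  \<open>N\<close> times that, and any test succeeds with probability at most \<open>1/2\<close> plus a quarter
  of the \<open>\<ell>\<^sub>1\<close> distance. That the \<open>p\<^sub>k(\<alpha>)\<close> form a probability distribution needs
  \<open>Tr[\<rho> M\<^sub>k] \<ge> 0\<close>, which follows by writing \<open>\<rho>\<close> as a sum of rank-one positive
  matrices, obtained by repeatedly taking Schur complements.
\<close>

section \<open>Positive semidefinite forms\<close>

definition quad_form :: "nat \<Rightarrow> (nat \<Rightarrow> nat \<Rightarrow> complex) \<Rightarrow> (nat \<Rightarrow> complex) \<Rightarrow> complex" where
  "quad_form d a v = (\<Sum>i<d. \<Sum>j<d. cnj (v i) * a i j * v j)"

definition psd_form :: "nat \<Rightarrow> (nat \<Rightarrow> nat \<Rightarrow> complex) \<Rightarrow> bool" where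
  "psd_form d a \<longleftrightarrow> (\<forall>v. Im (quad_form d a v) = 0 \<and> Re (quad_form d a v) \<ge> 0)"

lemma sum_lessThan_single:
  fixes d :: nat
  assumes "i < d" "\<And>l. l < d \<Longrightarrow> l \<noteq> i \<Longrightarrow> f l = 0"
  shows "(\<Sum>l<d. f l) = f i"
proof -
  have "(\<Sum>l<d. f l) = sum f {i}" using assms by (intro sum.mono_neutral_right) auto
  then show ?thesis by simp
qed

lemma sum_lessThan_pair:
  fixes d :: nat
  assumes "i < d" "j < d" "i \<noteq> j" "\<And>l. l < d \<Longrightarrow> l \<noteq> i \<Longrightarrow> l \<noteq> j \<Longrightarrow> f l = 0"
  shows "(\<Sum>l<d. f l) = f i + f j"
proof -
  have "(\<Sum>l<d. f l) = sum f {i, j}" using assms by (intro sum.mono_neutral_right) auto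
  then show ?thesis using assms(3) by simp
qed

lemma quad_form_single:
  assumes "i < d"
  shows "quad_form d a (\<lambda>l. if l = i then x else 0) = cnj x * a i i * x"
proof -
  let ?v = "\<lambda>l. if l = i then x else 0"
  have row: "(\<Sum>j<d. cnj (?v l) * a l j * ?v j) = cnj (?v l) * a l i * x" for l
    by (subst sum_lessThan_single[OF assms]) auto
  show ?thesis
    unfolding quad_form_def row by (subst sum_lessThan_single[OF assms]) auto
qed

lemma quad_form_pair:
  assumes "i < d" "j < d" "i \<noteq> j"
  shows "quad_form d a (\<lambda>l. if l = i then x else if l = j then y else 0) =
    cnj x * a i i * x + cnj x * a i j * y + cnj y * a j i * x + cnj y * a j j * y"
proof -
  let ?v = "\<lambda>l. if l = i then x else if l = j then y else 0"
  have row: "(\<Sum>j'<d. cnj (?v l) * a l j' * ?v j') = cnj (?v l) * a l i * x + cnj (?v l) * a l j * y" for l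
    by (subst sum_lessThan_pair[OF assms]) (use assms in auto)
  show ?thesis
    unfolding quad_form_def row
    by (subst sum_lessThan_pair[OF assms]) (use assms in \<open>auto simp: algebra_simps\<close>)
qed

lemma quad_form_add_basis:
  assumes "n < d"
  shows "quad_form d a (\<lambda>l. v l + (if l = n then t else 0)) = quad_form d a v
     + cnj t * (\<Sum>j<d. a n j * v j) + (\<Sum>i<d. cnj (v i) * a i n) * t + cnj t * a n n * t"
proof -
  have expand: "cnj (v i + (if i = n then t else 0)) * a i j * (v j + (if j = n then t else 0)) =
     cnj (v i) * a i j * v j + (if i = n then cnj t * a n j * v j else 0)
     + (if j = n then cnj (v i) * a i n * t else 0)
     + (if i = n then if j = n then cnj t * a n n * t else 0 else 0)" for i j
    by (auto simp: algebra_simps)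
  have delta: "(\<Sum>i<d. if i = n then f i else 0) = f n" for f :: "nat \<Rightarrow> complex"
    using assms by (simp add: sum.delta)
  have const_if: "(\<Sum>j<d. if P then f j else 0) = (if P then \<Sum>j<d. f j else 0)"
    for P and f :: "nat \<Rightarrow> complex"
    by simp
  show ?thesis
    unfolding quad_form_def expand sum.distrib const_if delta
    using assms by (simp add: sum_distrib_left sum_distrib_right mult.assoc)
qed

lemma quad_form_diff_rank_one:
  "quad_form d (\<lambda>i j. a i j - x i * y j) v
     = quad_form d a v - (\<Sum>i<d. cnj (v i) * x i) * (\<Sum>j<d. y j * v j)"
  unfolding quad_form_def
  by (simp add: algebra_simps sum_subtractf sum_distrib_left sum_distrib_right)

lemma psd_form_diag:
  assumes "psd_form d a" "i < d"
  shows "Im (a i i) = 0" "Re (a i i) \<ge> 0"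
  using assms(1) quad_form_single[OF assms(2), of a 1] unfolding psd_form_def
  by (metis mult_1 mult_1_right complex_cnj_one)+

lemma psd_form_hermitian:
  assumes "psd_form d a" "i < d" "j < d"
  shows "a j i = cnj (a i j)"
proof (cases "i = j")
  case True
  then show ?thesis using psd_form_diag[OF assms(1,2)] by (simp add: complex_eq_iff)
next
  case False
  have diag: "Im (a i i) = 0" "Im (a j j) = 0" using psd_form_diag assms by auto
  have "Im (quad_form d a (\<lambda>l. if l = i then 1 else if l = j then 1 else 0)) = 0"
    using assms(1) psd_form_def by blast
  then have im: "Im (a i j) + Im (a j i) = 0"
    using quad_form_pair[OF assms(2,3) False, of a 1 1] diag by simp
  have "Im (quad_form d a (\<lambda>l. if l = i then 1 else if l = j then \<i> else 0)) = 0"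
    using assms(1) psd_form_def by blast
  then have re: "Re (a i j) - Re (a j i) = 0"
    using quad_form_pair[OF assms(2,3) False, of a 1 \<i>] diag by simp
  show ?thesis using im re by (simp add: complex_eq_iff)
qed

lemma psd_form_zero_diag_row:
  assumes psd: "psd_form d a" and "n < d" "a n n = 0" "j < d"
  shows "a n j = 0"
proof (rule ccontr)
  let ?b = "a n j"
  assume "?b \<noteq> 0"
  then have jn: "n \<noteq> j" and b: "cmod ?b ^ 2 > 0" using assms by auto
  \<comment> \<open>the test vector \<open>-t b e\<^sub>n + e\<^sub>j\<close> has quadratic form \<open>a j j - 2 t |b|\<^sup>2\<close>, negative for large \<open>t\<close>\<close>
  define t where "t = (\<bar>Re (a j j)\<bar> + 1) / (2 * cmod ?b ^ 2)"
  have "a j n = cnj ?b" using psd_form_hermitian assms by blast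
  moreover have "Re (quad_form d a (\<lambda>l. if l = n then - (of_real t * ?b) else if l = j then 1 else 0)) \<ge> 0"
    using psd psd_form_def by blast
  ultimately have "Re (a j j) - 2 * t * (Re ?b ^ 2 + Im ?b ^ 2) \<ge> 0"
    using quad_form_pair[OF assms(2,4) jn, of a "- (of_real t * ?b)" 1] assms(3)
    by (simp add: algebra_simps power2_eq_square)
  then have "Re (a j j) - 2 * t * cmod ?b ^ 2 \<ge> 0" by (simp add: cmod_power2)
  moreover have "2 * t * cmod ?b ^ 2 = \<bar>Re (a j j)\<bar> + 1" unfolding t_def using b by simp
  ultimately show False by linarith
qed

lemma psd_form_schur_complement:
  assumes psd: "psd_form d a" and n: "n < d" and ann: "a n n \<noteq> 0"
  shows "psd_form d (\<lambda>i j. a i j - a i n * a n j / a n n)"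
  unfolding psd_form_def
proof
  fix v
  define S where "S = (\<Sum>j<d. a n j * v j)"
  define t where "t = - S / a n n"
  have ann_real: "cnj (a n n) = a n n" using psd_form_diag[OF psd n] by (simp add: complex_eq_iff)
  have col: "(\<Sum>i<d. cnj (v i) * a i n) = cnj S"
    unfolding S_def using psd_form_hermitian[OF psd n] by (simp add: mult.commute)
  have "quad_form d (\<lambda>i j. a i j - a i n / a n n * a n j) v = quad_form d a v - cnj S * S / a n n"
    unfolding quad_form_diff_rank_one S_def[symmetric] col[symmetric]
    by (simp add: sum_divide_distrib[symmetric] mult.assoc)
  also have "\<dots> = quad_form d a (\<lambda>l. v l + (if l = n then t else 0))"
    unfolding quad_form_add_basis[OF n] col S_def[symmetric] t_def
    using ann ann_real by (simp add: field_simps)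
  finally show "Im (quad_form d (\<lambda>i j. a i j - a i n * a n j / a n n) v) = 0 \<and>
      Re (quad_form d (\<lambda>i j. a i j - a i n * a n j / a n n) v) \<ge> 0"
    using psd unfolding psd_form_def by simp
qed

lemma psd_form_gram_aux:
  assumes "k \<le> d" "psd_form d a" "\<forall>i<d. \<forall>j<d. i < k \<or> j < k \<longrightarrow> a i j = 0"
  shows "\<exists>(K::nat) vs. \<forall>i<d. \<forall>j<d. a i j = (\<Sum>l<K. vs l i * cnj (vs l j))"
  using assms
proof (induction k arbitrary: a rule: inc_induct)
  case base
  then show ?case by (intro exI[of _ "0::nat"]) auto
next
  case (step n)
  have n: "n < d" using step.hyps by simp
  show ?case
  proof (cases "a n n = 0")
    case True
    have "a n j = 0" "a j n = 0" if "j < d" for j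
      using psd_form_zero_diag_row[OF step.prems(1) n True that]
        psd_form_hermitian[OF step.prems(1) n that] by simp_all
    then have "\<forall>i<d. \<forall>j<d. i < Suc n \<or> j < Suc n \<longrightarrow> a i j = 0"
      using step.prems(2) by (auto simp: less_Suc_eq)
    then show ?thesis using step.IH step.prems(1) by blast
  next
    case False
    define c where "c = Re (a n n)"
    have c: "c > 0" "a n n = of_real c"
      using psd_form_diag[OF step.prems(1) n] False by (auto simp: c_def complex_eq_iff)
    define a' where "a' i j = a i j - a i n * a n j / a n n" for i j
    have "psd_form d a'"
      unfolding a'_def[abs_def] using psd_form_schur_complement[OF step.prems(1) n False] .
    moreover have "\<forall>i<d. \<forall>j<d. i < Suc n \<or> j < Suc n \<longrightarrow> a' i j = 0"
      using step.prems(2) n False by (auto simp: a'_def less_Suc_eq)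
    ultimately obtain K :: nat and vs where K: "\<forall>i<d. \<forall>j<d. a' i j = (\<Sum>l<K. vs l i * cnj (vs l j))"
      using step.IH by blast
    define w where "w i = a i n / of_real (sqrt c)" for i
    have w: "w i * cnj (w j) = a i n * a n j / a n n" if "j < d" for i j
      using psd_form_hermitian[OF step.prems(1) that n] c
      by (simp add: w_def of_real_mult[symmetric] del: of_real_mult)
    show ?thesis
    proof (intro exI[of _ "Suc K"] exI[of _ "vs(K := w)"] allI impI)
      fix i j assume "i < d" "j < d"
      then show "a i j = (\<Sum>l<Suc K. (vs(K := w)) l i * cnj ((vs(K := w)) l j))"
        using K w by (simp add: a'_def diff_eq_eq)
    qed
  qed
qed

lemma psd_form_gram:
  assumes "psd_form d a"
  shows "\<exists>(K::nat) vs. \<forall>i<d. \<forall>j<d. a i j = (\<Sum>l<K. vs l i * cnj (vs l j))"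
  using psd_form_gram_aux[of 0 d a] assms by simp

section \<open>Outcome probabilities of a POVM\<close>

lemma psd_mat_imp_psd_form:
  assumes "psd_mat d A"
  shows "A \<in> carrier_mat d d" "psd_form d (\<lambda>i j. A $$ (i, j))"
  using assms unfolding psd_mat_def psd_form_def quad_form_def Let_def by auto

lemma mat_trace_mult:
  assumes "A \<in> carrier_mat d d" "B \<in> carrier_mat d d"
  shows "mat_trace (A * B) = (\<Sum>i<d. \<Sum>j<d. A $$ (i, j) * B $$ (j, i))"
  using assms unfolding mat_trace_def
  by (auto simp: scalar_prod_def atLeast0LessThan intro!: sum.cong)

lemma mat_trace_mult_psd_nonneg:
  assumes R: "psd_mat d R" and B: "psd_mat d B"
  shows "Re (mat_trace (R * B)) \<ge> 0"
proof -
  obtain K :: nat and vs where K: "\<forall>i<d. \<forall>j<d. R $$ (i, j) = (\<Sum>l<K. vs l i * cnj (vs l j))"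
    using psd_form_gram psd_mat_imp_psd_form(2)[OF R] by blast
  have "mat_trace (R * B) = (\<Sum>i<d. \<Sum>j<d. \<Sum>l<K. cnj (vs l j) * B $$ (j, i) * vs l i)"
    unfolding mat_trace_mult[OF psd_mat_imp_psd_form(1)[OF R] psd_mat_imp_psd_form(1)[OF B]]
    using K by (intro sum.cong refl) (simp add: sum_distrib_left sum_distrib_right mult_ac)
  also have "\<dots> = (\<Sum>l<K. \<Sum>j<d. \<Sum>i<d. cnj (vs l j) * B $$ (j, i) * vs l i)"
    by (subst sum.swap, subst (1 2) sum.swap) (rule refl)
  also have "\<dots> = (\<Sum>l<K. quad_form d (\<lambda>i j. B $$ (i, j)) (vs l))"
    unfolding quad_form_def ..
  finally have "Re (mat_trace (R * B)) = (\<Sum>l<K. Re (quad_form d (\<lambda>i j. B $$ (i, j)) (vs l)))"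
    by simp
  also have "\<dots> \<ge> 0"
    using psd_mat_imp_psd_form(2)[OF B] unfolding psd_form_def by (intro sum_nonneg) auto
  finally show ?thesis .
qed

lemma outcome_prob_nonneg:
  assumes "density_mat d \<rho>" "is_POVM d m M" "k < m"
  shows "outcome_prob \<rho> (M k) \<ge> 0"
  using assms mat_trace_mult_psd_nonneg
  unfolding density_mat_def is_POVM_def outcome_prob_def by blast

lemma sum_outcome_prob:
  assumes \<rho>: "density_mat d \<rho>" and M: "is_POVM d m M"
  shows "(\<Sum>k<m. outcome_prob \<rho> (M k)) = 1"
proof -
  have \<rho>_carrier: "\<rho> \<in> carrier_mat d d"
    using \<rho> psd_mat_imp_psd_form unfolding density_mat_def by blast
  have M_carrier: "M k \<in> carrier_mat d d" if "k < m" for k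
    using M psd_mat_imp_psd_form that unfolding is_POVM_def by blast
  have id: "(\<Sum>k<m. M k $$ (j, i)) = (if j = i then 1 else 0)" if "i < d" "j < d" for i j
    using M that unfolding is_POVM_def by simp
  have "(\<Sum>k<m. mat_trace (\<rho> * M k)) = (\<Sum>k<m. \<Sum>i<d. \<Sum>j<d. \<rho> $$ (i, j) * M k $$ (j, i))"
    using mat_trace_mult[OF \<rho>_carrier M_carrier] by simp
  also have "\<dots> = (\<Sum>i<d. \<Sum>j<d. \<rho> $$ (i, j) * (\<Sum>k<m. M k $$ (j, i)))"
    by (subst sum.swap, subst sum_distrib_left) (intro sum.cong refl sum.swap)
  also have "\<dots> = (\<Sum>i<d. \<rho> $$ (i, i))"
    by (intro sum.cong refl) (simp add: id sum.delta if_distrib cong: if_cong)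
  also have "\<dots> = 1" using \<rho> \<rho>_carrier unfolding density_mat_def mat_trace_def by simp
  finally show ?thesis unfolding outcome_prob_def by (simp flip: Re_sum)
qed

section \<open>Distinguishing i.i.d. samples\<close>

lemma samples_0: "samples m 0 = {[]}"
  by (auto simp: samples_def)

lemma samples_Suc: "samples m (Suc N) = (\<lambda>(x, xs). x # xs) ` ({..<m} \<times> samples m N)"
  by (auto simp: samples_def length_Suc_conv image_iff)

lemma sum_samples_Suc:
  "(\<Sum>xs\<in>samples m (Suc N). f xs) = (\<Sum>x<m. \<Sum>xs\<in>samples m N. f (x # xs))"
proof -
  have inj: "inj_on (\<lambda>(x, xs). x # xs) ({..<m} \<times> samples m N)"
    by (auto simp: inj_on_def)
  show ?thesis
    unfolding samples_Suc sum.reindex[OF inj] sum.cartesian_product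
    by (auto intro: sum.cong)
qed

lemma sample_prob_Nil [simp]: "sample_prob p [] = 1"
  by (simp add: sample_prob_def)

lemma sample_prob_Cons [simp]: "sample_prob p (x # xs) = p x * sample_prob p xs"
  by (simp add: sample_prob_def)

lemma sample_prob_nonneg:
  assumes "\<forall>k<m. p k \<ge> 0" "xs \<in> samples m N"
  shows "sample_prob p xs \<ge> 0"
  using assms unfolding sample_prob_def samples_def
  by (auto simp: subset_iff intro!: prod_list_nonneg)

lemma sum_sample_prob:
  assumes "(\<Sum>k<m. p k) = 1"
  shows "(\<Sum>xs\<in>samples m N. sample_prob p xs) = 1"
  by (induction N) (simp_all add: samples_0 sum_samples_Suc assms flip: sum_distrib_left)

lemma sum_abs_sample_prob_diff_le:
  assumes p0: "\<forall>k<m. p k \<ge> 0" and q0: "\<forall>k<m. q k \<ge> 0"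
    and p1: "(\<Sum>k<m. p k) = 1" and q1: "(\<Sum>k<m. q k) = 1"
  shows "(\<Sum>xs\<in>samples m N. \<bar>sample_prob p xs - sample_prob q xs\<bar>) \<le> real N * (\<Sum>k<m. \<bar>p k - q k\<bar>)"
proof (induction N)
  case 0
  then show ?case by (simp add: samples_0)
next
  case (Suc N)
  let ?L = "\<Sum>k<m. \<bar>p k - q k\<bar>"
  let ?S = "\<Sum>xs\<in>samples m N. \<bar>sample_prob p xs - sample_prob q xs\<bar>"
  have hybrid: "\<bar>p x * sample_prob p xs - q x * sample_prob q xs\<bar>
      \<le> \<bar>p x - q x\<bar> * sample_prob p xs + q x * \<bar>sample_prob p xs - sample_prob q xs\<bar>"
    if "x < m" "xs \<in> samples m N" for x xs
  proof -
    have nonneg: "sample_prob p xs \<ge> 0" "q x \<ge> 0"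
      using sample_prob_nonneg[OF p0 that(2)] q0 that(1) by auto
    have "\<bar>p x * sample_prob p xs - q x * sample_prob q xs\<bar>
        = \<bar>(p x - q x) * sample_prob p xs + q x * (sample_prob p xs - sample_prob q xs)\<bar>"
      by (simp add: algebra_simps)
    also have "\<dots> \<le> \<bar>(p x - q x) * sample_prob p xs\<bar> + \<bar>q x * (sample_prob p xs - sample_prob q xs)\<bar>"
      by (rule abs_triangle_ineq)
    finally show ?thesis using nonneg by (simp add: abs_mult)
  qed
  have "(\<Sum>xs\<in>samples m (Suc N). \<bar>sample_prob p xs - sample_prob q xs\<bar>)
      \<le> (\<Sum>x<m. \<Sum>xs\<in>samples m N. \<bar>p x - q x\<bar> * sample_prob p xs + q x * \<bar>sample_prob p xs - sample_prob q xs\<bar>)"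
    unfolding sum_samples_Suc sample_prob_Cons using hybrid by (intro sum_mono) auto
  also have "\<dots> = (\<Sum>x<m. \<bar>p x - q x\<bar> * (\<Sum>xs\<in>samples m N. sample_prob p xs) + q x * ?S)"
    by (simp add: sum.distrib sum_distrib_left)
  also have "\<dots> = ?L + (\<Sum>x<m. q x) * ?S"
    using sum_sample_prob[OF p1] by (simp add: sum.distrib sum_distrib_right)
  also have "\<dots> \<le> real (Suc N) * ?L"
    using Suc q1 by (simp add: algebra_simps)
  finally show ?case .
qed

lemma success_prob_le_l1_dist:
  assumes D: "is_test D"
    and p1: "(\<Sum>xs\<in>samples m N. sample_prob p xs) = 1"
    and q1: "(\<Sum>xs\<in>samples m N. sample_prob q xs) = 1"
  shows "success_prob m N p q D \<le> 1/2 + 1/4 * (\<Sum>xs\<in>samples m N. \<bar>sample_prob p xs - sample_prob q xs\<bar>)"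
proof -
  have pointwise: "1/2 * (P * D xs) + 1/2 * (Q * (1 - D xs)) \<le> 1/4 * P + 1/4 * Q + 1/4 * \<bar>P - Q\<bar>"
    for P Q xs
  proof -
    have "(P - Q) * (2 * D xs - 1) \<le> \<bar>P - Q\<bar> * \<bar>2 * D xs - 1\<bar>"
      by (metis abs_ge_self abs_mult)
    also have "\<dots> \<le> \<bar>P - Q\<bar>"
      using D unfolding is_test_def by (intro mult_left_le) (auto simp: abs_if)
    finally show ?thesis by (simp add: algebra_simps)
  qed
  have "success_prob m N p q D
      = (\<Sum>xs\<in>samples m N. 1/2 * (sample_prob p xs * D xs) + 1/2 * (sample_prob q xs * (1 - D xs)))"
    unfolding success_prob_def by (simp add: sum.distrib sum_distrib_left)
  also have "\<dots> \<le> (\<Sum>xs\<in>samples m N. 1/4 * sample_prob p xs + 1/4 * sample_prob q xs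
      + 1/4 * \<bar>sample_prob p xs - sample_prob q xs\<bar>)"
    by (intro sum_mono pointwise)
  also have "\<dots> = 1/2 + 1/4 * (\<Sum>xs\<in>samples m N. \<bar>sample_prob p xs - sample_prob q xs\<bar>)"
    using p1 q1 by (simp add: sum.distrib sum_divide_distrib[symmetric])
  finally show ?thesis .
qed

lemma success_prob_le_max_dist:
  assumes p0: "\<forall>k<m. p k \<ge> 0" and q0: "\<forall>k<m. q k \<ge> 0"
    and p1: "(\<Sum>k<m. p k) = 1" and q1: "(\<Sum>k<m. q k) = 1"
    and close: "\<forall>k<m. \<bar>p k - q k\<bar> \<le> r" and D: "is_test D"
  shows "success_prob m N p q D \<le> 1/2 + real N * real m * r / 4"
proof -
  have "(\<Sum>k<m. \<bar>p k - q k\<bar>) \<le> real m * r"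
    using sum_bounded_above[of "{..<m}" "\<lambda>k. \<bar>p k - q k\<bar>" r] close by simp
  then have "real N * (\<Sum>k<m. \<bar>p k - q k\<bar>) \<le> real N * real m * r"
    by (metis mult.assoc mult_left_mono of_nat_0_le_iff)
  then show ?thesis
    using success_prob_le_l1_dist[OF D sum_sample_prob[OF p1, of N] sum_sample_prob[OF q1, of N]]
      sum_abs_sample_prob_diff_le[OF p0 q0 p1 q1, of N]
    by linarith
qed

lemma stat_indistI:
  assumes "\<And>D. is_test D \<Longrightarrow> success_prob m N P Q D \<le> 1/2 + \<epsilon>" "\<epsilon> \<le> 1/100"
  shows "stat_indist m N P Q"
  using assms unfolding stat_indist_def by force

section \<open>Concentration of the outcome probabilities\<close>

lemma (in prob_space) prob_abs_gt_root4_le_sqrt: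
  assumes f: "f \<in> borel_measurable M"
    and tail: "\<And>\<delta>. \<delta> > 0 \<Longrightarrow> prob {x \<in> space M. \<bar>f x\<bar> \<ge> \<delta>} \<le> \<beta> / \<delta>\<^sup>2"
  shows "prob {x \<in> space M. root 4 \<beta> < \<bar>f x\<bar>} \<le> sqrt \<beta>"
proof -
  have "\<beta> \<ge> 0" using order_trans[OF measure_nonneg tail[of 1, simplified]] .
  then consider "\<beta> > 0" | "\<beta> = 0" by linarith
  then show ?thesis
  proof cases
    case 1
    have "prob {x \<in> space M. root 4 \<beta> < \<bar>f x\<bar>} \<le> prob {x \<in> space M. \<bar>f x\<bar> \<ge> root 4 \<beta>}"
      using f by (intro finite_measure_mono) auto
    also have "\<dots> \<le> \<beta> / (root 4 \<beta>)\<^sup>2" using 1 by (intro tail) simp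
    also have "(root 4 \<beta>)\<^sup>2 = sqrt \<beta>"
      using 1 by (simp add: sqrt_def real_root_mult_exp[of 2 2, simplified] real_root_pow_pos2)
    finally show ?thesis using 1 by (simp add: real_div_sqrt)
  next
    case 2
    \<comment> \<open>the tail bound at \<open>\<delta> = root 4 \<beta> = 0\<close> is unavailable; use the levels \<open>1 / Suc j\<close>\<close>
    define S where "S j = {x \<in> space M. \<bar>f x\<bar> \<ge> 1 / Suc j}" for j :: nat
    have "S j \<in> null_sets M" for j
      using tail[of "1 / Suc j"] 2 f
      by (auto simp: S_def null_sets_def emeasure_eq_measure measure_le_0_iff)
    moreover have "{x \<in> space M. root 4 \<beta> < \<bar>f x\<bar>} = (\<Union>j. S j)"
    proof (intro equalityI subsetI)
      fix x assume "x \<in> {x \<in> space M. root 4 \<beta> < \<bar>f x\<bar>}"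
      then have "x \<in> space M" "\<bar>f x\<bar> > 0" using 2 by auto
      then show "x \<in> (\<Union>j. S j)"
        using reals_Archimedean[of "\<bar>f x\<bar>"] by (auto simp: S_def inverse_eq_divide intro: less_imp_le)
    qed (auto simp: S_def 2 intro: less_le_trans[of 0 "1 / Suc _"])
    ultimately show ?thesis using 2 by (simp add: measure_eq_0_null_sets null_sets_UN)
  qed
qed

lemma (in prob_space) exists_event_all_abs_le_root4:
  assumes meas: "\<And>k. k < m \<Longrightarrow> f k \<in> borel_measurable M"
    and tail: "\<And>k \<delta>. k < m \<Longrightarrow> \<delta> > 0 \<Longrightarrow> prob {x \<in> space M. \<bar>f k x\<bar> \<ge> \<delta>} \<le> \<beta> / \<delta>\<^sup>2"
  shows "\<exists>E \<in> events. prob E \<ge> 1 - real m * sqrt \<beta> \<and> (\<forall>x \<in> E. \<forall>k<m. \<bar>f k x\<bar> \<le> root 4 \<beta>)"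
proof -
  define B where "B k = {x \<in> space M. root 4 \<beta> < \<bar>f k x\<bar>}" for k
  have B: "B k \<in> events" if "k < m" for k
    unfolding B_def using meas[OF that] by measurable
  then have UB: "(\<Union>k<m. B k) \<in> events" by blast
  have "prob (\<Union>k<m. B k) \<le> (\<Sum>k<m. prob (B k))"
    using B by (intro finite_measure_subadditive_finite) auto
  also have "\<dots> \<le> real m * sqrt \<beta>"
    using sum_bounded_above[of "{..<m}" "\<lambda>k. prob (B k)" "sqrt \<beta>"]
      prob_abs_gt_root4_le_sqrt[OF meas tail] by (simp add: B_def)
  finally have "prob (space M - (\<Union>k<m. B k)) \<ge> 1 - real m * sqrt \<beta>"
    using prob_compl[OF UB] by simp
  moreover have "\<forall>x \<in> space M - (\<Union>k<m. B k). \<forall>k<m. \<bar>f k x\<bar> \<le> root 4 \<beta>"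
    by (auto simp: B_def not_less)
  ultimately show ?thesis using UB by blast
qed

lemma success_prob_le_on_concentrated_event:
  assumes A: "prob_space A"
    and states: "\<And>\<alpha>. \<alpha> \<in> space A \<Longrightarrow> density_mat d (\<rho> \<alpha>)"
    and povm: "is_POVM d m M"
    and meas: "\<And>k. k < m \<Longrightarrow> (\<lambda>\<alpha>. outcome_prob (\<rho> \<alpha>) (M k)) \<in> borel_measurable A"
    and mu: "\<And>k. k < m \<Longrightarrow> \<mu> k \<ge> 0" "(\<Sum>k<m. \<mu> k) = 1"
    and conc: "\<And>k \<delta>. k < m \<Longrightarrow> \<delta> > 0 \<Longrightarrow>
        measure A {\<alpha> \<in> space A. \<bar>outcome_prob (\<rho> \<alpha>) (M k) - \<mu> k\<bar> \<ge> \<delta>} \<le> \<beta> / \<delta>\<^sup>2"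
  shows "\<exists>E \<in> sets A. measure A E \<ge> 1 - real m * sqrt \<beta> \<and>
           (\<forall>\<alpha> \<in> E. \<forall>D. is_test D \<longrightarrow>
              success_prob m N (\<lambda>k. outcome_prob (\<rho> \<alpha>) (M k)) \<mu> D \<le> 1/2 + real N * real m * root 4 \<beta> / 4)"
proof -
  interpret prob_space A by (rule A)
  obtain E where E: "E \<in> events" "prob E \<ge> 1 - real m * sqrt \<beta>"
    and close: "\<forall>\<alpha> \<in> E. \<forall>k<m. \<bar>outcome_prob (\<rho> \<alpha>) (M k) - \<mu> k\<bar> \<le> root 4 \<beta>"
    using exists_event_all_abs_le_root4[of m "\<lambda>k \<alpha>. outcome_prob (\<rho> \<alpha>) (M k) - \<mu> k", OF _ conc]
      meas by auto
  have "success_prob m N (\<lambda>k. outcome_prob (\<rho> \<alpha>) (M k)) \<mu> D \<le> 1/2 + real N * real m * root 4 \<beta> / 4"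
    if "\<alpha> \<in> E" "is_test D" for \<alpha> D
  proof -
    have \<rho>: "density_mat d (\<rho> \<alpha>)" using states sets.sets_into_space E(1) that(1) by blast
    show ?thesis
    proof (rule success_prob_le_max_dist)
      show "\<forall>k<m. outcome_prob (\<rho> \<alpha>) (M k) \<ge> 0" using outcome_prob_nonneg[OF \<rho> povm] by blast
      show "(\<Sum>k<m. outcome_prob (\<rho> \<alpha>) (M k)) = 1" using sum_outcome_prob[OF \<rho> povm] .
      show "\<forall>k<m. \<bar>outcome_prob (\<rho> \<alpha>) (M k) - \<mu> k\<bar> \<le> root 4 \<beta>" using close that(1) by blast
    qed (use mu that(2) in auto)
  qed
  then show ?thesis using E by blast
qed

section \<open>Exponential decay\<close>

lemma root_bigo_exp:
  fixes \<beta> :: "nat \<Rightarrow> real"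
  assumes "\<beta> \<in> O(\<lambda>n. exp (- real n))" "\<And>n. \<beta> n \<ge> 0" "k > 0"
  shows "(\<lambda>n. root k (\<beta> n)) \<in> O(\<lambda>n. exp (- (1 / k) * real n))"
proof -
  have "(\<lambda>n. \<beta> n powr (1 / k)) \<in> O(\<lambda>n. exp (- real n) powr (1 / k))"
    using assms by (intro bigo_powr_nonneg) auto
  then show ?thesis
    using assms(2,3) by (simp add: root_powr_inverse exp_powr_real mult.commute)
qed

lemma poly_mult_exp_decay:
  fixes f g :: "nat \<Rightarrow> real"
  assumes "f \<in> O(\<lambda>n. real n ^ d)" "g \<in> O(\<lambda>n. exp (- c * real n))" "c > 0"
  shows "\<exists>c'>0. (\<lambda>n. f n * g n) \<in> O(\<lambda>n. exp (- c' * real n))"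
proof (intro exI conjI)
  have "(\<lambda>n. f n * g n) \<in> O(\<lambda>n. real n ^ d * exp (- c * real n))"
    using assms(1,2) by (rule landau_o.big.mult)
  also have "(\<lambda>n. real n ^ d * exp (- c * real n)) \<in> O(\<lambda>n. exp (- (c / 2) * real n))"
    using assms(3) by real_asymp
  finally show "(\<lambda>n. f n * g n) \<in> O(\<lambda>n. exp (- (c / 2) * real n))" .
qed (use assms(3) in simp)

lemma exp_decay_tendsto_zero:
  fixes f :: "nat \<Rightarrow> real"
  assumes "f \<in> O(\<lambda>n. exp (- c * real n))" "c > 0"
  shows "f \<longlonglongrightarrow> 0"
proof -
  have "(\<lambda>n. exp (- c * real n)) \<in> o(\<lambda>_. 1)" using assms(2) by real_asymp
  with assms(1) have "f \<in> o(\<lambda>_. 1)" by (rule landau_o.big_small_trans)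
  then show ?thesis using smalloD_tendsto by fastforce
qed


theorem theorem2:
  fixes A :: "nat \<Rightarrow> 'a measure"
    and \<rho> :: "nat \<Rightarrow> 'a \<Rightarrow> complex mat"
    and M :: "nat \<Rightarrow> nat \<Rightarrow> complex mat"
    and m :: "nat \<Rightarrow> nat"
    and \<mu> :: "nat \<Rightarrow> nat \<Rightarrow> real"
    and \<beta> :: "nat \<Rightarrow> real"
    and N :: "nat \<Rightarrow> nat"
  assumes probsp: "\<And>n. prob_space (A n)"
    and states: "\<And>n \<alpha>. \<alpha> \<in> space (A n) \<Longrightarrow> density_mat (2 ^ n) (\<rho> n \<alpha>)"
    and povm: "\<And>n. is_POVM (2 ^ n) (m n) (M n)"
    and m_poly: "\<exists>d::nat. (\<lambda>n. real (m n)) \<in> O(\<lambda>n. real n ^ d)"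
    and meas: "\<And>n k. k < m n \<Longrightarrow> (\<lambda>\<alpha>. outcome_prob (\<rho> n \<alpha>) (M n k)) \<in> borel_measurable (A n)"
    and mu_dist: "\<And>n k. k < m n \<Longrightarrow> \<mu> n k \<ge> 0" "\<And>n. (\<Sum>k<m n. \<mu> n k) = 1"
    and conc: "\<And>n k \<delta>'. k < m n \<Longrightarrow> \<delta>' > 0 \<Longrightarrow>
        measure (A n) {\<alpha> \<in> space (A n). \<bar>outcome_prob (\<rho> n \<alpha>) (M n k) - \<mu> n k\<bar> \<ge> \<delta>'}
          \<le> \<beta> n / \<delta>'\<^sup>2"
    and beta_exp: "\<beta> \<in> O(\<lambda>n. exp (- real n))"
    and N_poly: "\<exists>d::nat. (\<lambda>n. real (N n)) \<in> O(\<lambda>n. real n ^ d)"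
  shows "(\<forall>n. \<exists>E \<in> sets (A n).
            measure (A n) E \<ge> 1 - real (m n) * sqrt (\<beta> n) \<and>
            (\<forall>\<alpha> \<in> E. \<forall>D. is_test D \<longrightarrow>
               success_prob (m n) (N n) (\<lambda>k. outcome_prob (\<rho> n \<alpha>) (M n k)) (\<mu> n) D
                 \<le> 1/2 + real (N n) * real (m n) * root 4 (\<beta> n) / 4))
    \<and> (\<exists>c>0. (\<lambda>n. real (m n) * sqrt (\<beta> n)) \<in> O(\<lambda>n. exp (- c * real n)))
    \<and> (\<exists>c>0. (\<lambda>n. real (N n) * real (m n) * root 4 (\<beta> n) / 4) \<in> O(\<lambda>n. exp (- c * real n)))
    \<and> (\<forall>\<^sub>F n in sequentially. \<exists>E \<in> sets (A n).
            measure (A n) E \<ge> 1 - real (m n) * sqrt (\<beta> n) \<and>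
            (\<forall>\<alpha> \<in> E. stat_indist (m n) (N n) (\<lambda>k. outcome_prob (\<rho> n \<alpha>) (M n k)) (\<mu> n)))"
proof -
  let ?\<epsilon> = "\<lambda>n. real (N n) * real (m n) * root 4 (\<beta> n) / 4"
  have good_event: "\<exists>E \<in> sets (A n). measure (A n) E \<ge> 1 - real (m n) * sqrt (\<beta> n) \<and>
      (\<forall>\<alpha> \<in> E. \<forall>D. is_test D \<longrightarrow>
         success_prob (m n) (N n) (\<lambda>k. outcome_prob (\<rho> n \<alpha>) (M n k)) (\<mu> n) D \<le> 1/2 + ?\<epsilon> n)" for n
    by (rule success_prob_le_on_concentrated_event[OF probsp states povm meas mu_dist conc])
  have beta_nonneg: "\<beta> n \<ge> 0" for n
  proof -
    have "m n > 0" using mu_dist(2)[of n] by (cases "m n") auto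
    then show ?thesis using order_trans[OF measure_nonneg conc[of 0 n 1]] by simp
  qed
  obtain d1 d2 :: nat where d1: "(\<lambda>n. real (m n)) \<in> O(\<lambda>n. real n ^ d1)"
    and d2: "(\<lambda>n. real (N n)) \<in> O(\<lambda>n. real n ^ d2)"
    using m_poly N_poly by blast
  have \<delta>_decay: "\<exists>c>0. (\<lambda>n. real (m n) * sqrt (\<beta> n)) \<in> O(\<lambda>n. exp (- c * real n))"
    using poly_mult_exp_decay[OF d1 root_bigo_exp[OF beta_exp beta_nonneg, of 2]] by (simp add: sqrt_def)
  have "(\<lambda>n. real (N n) * real (m n)) \<in> O(\<lambda>n. real n ^ (d2 + d1))"
    using landau_o.big.mult[OF d2 d1] by (simp add: power_add)
  from poly_mult_exp_decay[OF this root_bigo_exp[OF beta_exp beta_nonneg, of 4]]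
  obtain c where c: "c > 0" "?\<epsilon> \<in> O(\<lambda>n. exp (- c * real n))" by auto
  have "\<forall>\<^sub>F n in sequentially. ?\<epsilon> n < 1/100"
    using exp_decay_tendsto_zero[OF c(2,1)] by (rule order_tendstoD) simp
  then have "\<forall>\<^sub>F n in sequentially. \<exists>E \<in> sets (A n).
      measure (A n) E \<ge> 1 - real (m n) * sqrt (\<beta> n) \<and>
      (\<forall>\<alpha> \<in> E. stat_indist (m n) (N n) (\<lambda>k. outcome_prob (\<rho> n \<alpha>) (M n k)) (\<mu> n))"
    by (rule eventually_mono) (use good_event in \<open>blast intro: stat_indistI less_imp_le\<close>)
  then show ?thesis using good_event \<delta>_decay c by blast
qed

end
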